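(* Let $\alpha$ be an ordinal and let $\mathcal{X}=\{X_a\}_{a\in J}$ be a family of metric spaces. Suppose that for every real $r>0$ each $X_a$ can be written as an $r$-disjoint union $X_a=\bigcup_i X_a^i$ (i.e. $\{X_a^i\}_i$ is $r$-disjoint) in such a way that the family $\{X_a^i\}_{i,a}$ belongs to $\mathfrak{C}_\alpha$. Then $\mathcal{X}\in\mathfrak{C}_{\alpha+1}$.
   Context: A family $\mathcal{U}$ of metric subspaces of a metric space $(X,d)$ is $r$-disjoint if $d(x,y)>r$ whenever $x\in U$, $y\in U'$, $U\neq U'$ in $\mathcal{U}$. For families $\mathcal{X},\mathcal{Y}$ and $R\in\mathbb{R}^{\mathbb{N}}$, $\mathcal{X}\xrightarrow{R}\mathcal{Y}$ means: there is an integer $k$ such that for each $X\in\mathcal{X}$ there are subcollections $\mathcal{U}_1,\dots,\mathcal{U}_k\subseteq\mathcal{Y}$ of subspaces of $X$, each $\mathcal{U}_i$ being $R_i$-disjoint, with $\bigcup_i\mathcal{U}_i$ covering $X$. A family is bounded if the diameters of its members are uniformly bounded. $\mathfrak{C}_0$ is the class of bounded families; for an ordinal $\alpha>0$, $\mathfrak{C}_\alpha$ is the class of families $\mathcal{X}$ such that for every $R\in\mathbb{R}^{\mathbb{N}}$ there exist $\beta<\alpha$ and $\mathcal{Y}\in\mathfrak{C}_\beta$ with $\mathcal{X}\xrightarrow{R}\mathcal{Y}$. All subspaces carry the induced metric. *)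

theory Defs
  imports "HOL-Analysis.Analysis"
begin

text \<open>A metric space is represented as a pair (carrier, distance function) over a point
  type 'p; a family of metric spaces is a set of such pairs.\<close>

type_synonym 'p mspace = "'p set \<times> ('p \<Rightarrow> 'p \<Rightarrow> real)"

definition r_disjoint :: "real \<Rightarrow> ('p \<Rightarrow> 'p \<Rightarrow> real) \<Rightarrow> 'p set set \<Rightarrow> bool" where
  "r_disjoint r d \<U> \<longleftrightarrow>
     (\<forall>U\<in>\<U>. \<forall>U'\<in>\<U>. U \<noteq> U' \<longrightarrow> (\<forall>x\<in>U. \<forall>y\<in>U'. d x y > r))"

definition is_subspace :: "'p mspace \<Rightarrow> 'p mspace \<Rightarrow> bool" where
  "is_subspace U X \<longleftrightarrow> fst U \<subseteq> fst X \<and>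
     (\<forall>x\<in>fst U. \<forall>y\<in>fst U. snd U x y = snd X x y)"

definition decomposes :: "(nat \<Rightarrow> real) \<Rightarrow> 'p mspace set \<Rightarrow> 'p mspace set \<Rightarrow> bool" where
  "decomposes R \<X> \<Y> \<longleftrightarrow> (\<exists>k::nat. \<forall>X\<in>\<X>. \<exists>\<U>::nat \<Rightarrow> 'p mspace set.
     (\<forall>i\<in>{1..k}. \<U> i \<subseteq> \<Y> \<and> (\<forall>U\<in>\<U> i. is_subspace U X) \<and>
        r_disjoint (R i) (snd X) (fst ` \<U> i)) \<and>
     fst X = (\<Union>i\<in>{1..k}. \<Union>U\<in>\<U> i. fst U))"

definition bounded_family :: "'p mspace set \<Rightarrow> bool" where
  "bounded_family \<X> \<longleftrightarrow> (\<exists>B::real. \<forall>X\<in>\<X>. \<forall>x\<in>fst X. \<forall>y\<in>fst X. snd X x y \<le> B)"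

text \<open>The classes C_alpha, indexed by elements of a well-ordered type (ordinals are
  modelled as initial segments of a well-order).  Defined as the least solution of the
  (well-founded) recursive definition, which is its unique solution.\<close>
inductive inC :: "'o::wellorder \<Rightarrow> 'p mspace set \<Rightarrow> bool" where
  zero: "(\<forall>\<beta>. \<not> \<beta> < \<alpha>) \<Longrightarrow> bounded_family \<X> \<Longrightarrow> inC \<alpha> \<X>"
| pos: "(\<exists>\<beta>. \<beta> < \<alpha>) \<Longrightarrow>
        (\<forall>R::nat \<Rightarrow> real. \<exists>\<beta><\<alpha>. \<exists>\<Y>. inC \<beta> \<Y> \<and> decomposes R \<X> \<Y>) \<Longrightarrow> inC \<alpha> \<X>"

end

theory Submission
  imports Defs
begin

text \<open>Given R, cut every X into an r-disjoint family of pieces with r = max (R 1) 1.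
  These pieces form one R 1-disjoint family covering X, so X decomposes with k = 1 into the
  family of all pieces, which lies in C_alpha.\<close>

lemma r_disjoint_mono:
  assumes "r \<le> s" and "r_disjoint s d \<U>"
  shows "r_disjoint r d \<U>"
  using assms unfolding r_disjoint_def by (meson le_less_trans)

lemma decomposes_into_disjoint_covers:
  assumes cover: "\<forall>X\<in>\<X>. (\<forall>U\<in>D X. U \<subseteq> fst X) \<and> \<Union>(D X) = fst X"
    and disjoint: "\<forall>X\<in>\<X>. r_disjoint (R 1) (snd X) (D X)"
  shows "decomposes R \<X> {(U, snd X) | X U. X \<in> \<X> \<and> U \<in> D X}"
  unfolding decomposes_def
proof (intro exI[of _ 1] ballI)
  fix X assume X: "X \<in> \<X>"
  define \<U> where "\<U> = (\<lambda>i::nat. (\<lambda>U. (U, snd X)) ` D X)"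
  have "\<U> 1 \<subseteq> {(U, snd X) | X U. X \<in> \<X> \<and> U \<in> D X}"
    unfolding \<U>_def using X by blast
  moreover have "\<forall>U\<in>\<U> 1. is_subspace U X"
    unfolding \<U>_def is_subspace_def using cover X by auto
  moreover have "r_disjoint (R 1) (snd X) (fst ` \<U> 1)"
    unfolding \<U>_def using disjoint X by (simp add: image_image)
  ultimately have pieces: "\<forall>i\<in>{1..1}. \<U> i \<subseteq> {(U, snd X) | X U. X \<in> \<X> \<and> U \<in> D X} \<and>
      (\<forall>U\<in>\<U> i. is_subspace U X) \<and> r_disjoint (R i) (snd X) (fst ` \<U> i)"
    by simp
  have "fst X = (\<Union>i\<in>{1..1}. \<Union>U\<in>\<U> i. fst U)"
    unfolding \<U>_def using cover X by auto
  with pieces show "\<exists>\<U>::nat \<Rightarrow> 'a mspace set.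
      (\<forall>i\<in>{1..1}. \<U> i \<subseteq> {(U, snd X) | X U. X \<in> \<X> \<and> U \<in> D X} \<and>
         (\<forall>U\<in>\<U> i. is_subspace U X) \<and> r_disjoint (R i) (snd X) (fst ` \<U> i)) \<and>
      fst X = (\<Union>i\<in>{1..1}. \<Union>U\<in>\<U> i. fst U)"
    by (intro exI[of _ \<U>] conjI)
qed

theorem mainTheorem12:
  fixes \<alpha> \<alpha>' :: "'o::wellorder" and \<X> :: "'p mspace set"
  assumes succ: "\<alpha> < \<alpha>'" "\<forall>\<gamma>. \<alpha> < \<gamma> \<longrightarrow> \<alpha>' \<le> \<gamma>"
    and metric: "\<forall>X\<in>\<X>. Metric_space (fst X) (snd X)"
    and hyp: "\<forall>r::real. r > 0 \<longrightarrow> (\<exists>D :: 'p mspace \<Rightarrow> 'p set set.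
       (\<forall>X\<in>\<X>. (\<forall>U\<in>D X. U \<subseteq> fst X) \<and> \<Union>(D X) = fst X \<and> r_disjoint r (snd X) (D X)) \<and>
       inC \<alpha> {(U, snd X) | X U. X \<in> \<X> \<and> U \<in> D X})"
  shows "inC \<alpha>' \<X>"
proof (rule inC.pos)
  show "\<exists>\<beta>. \<beta> < \<alpha>'" using succ(1) by blast
  show "\<forall>R::nat \<Rightarrow> real. \<exists>\<beta><\<alpha>'. \<exists>\<Y>. inC \<beta> \<Y> \<and> decomposes R \<X> \<Y>"
  proof
    fix R :: "nat \<Rightarrow> real"
    have "max (R 1) 1 > 0" by simp
    then obtain D :: "'p mspace \<Rightarrow> 'p set set" where
      D: "\<forall>X\<in>\<X>. (\<forall>U\<in>D X. U \<subseteq> fst X) \<and> \<Union>(D X) = fst X \<and>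
                  r_disjoint (max (R 1) 1) (snd X) (D X)"
      and pieces: "inC \<alpha> {(U, snd X) | X U. X \<in> \<X> \<and> U \<in> D X}"
      using hyp[rule_format, OF \<open>max (R 1) 1 > 0\<close>] by (elim exE conjE)
    have "\<forall>X\<in>\<X>. (\<forall>U\<in>D X. U \<subseteq> fst X) \<and> \<Union>(D X) = fst X"
      using D by blast
    moreover have "\<forall>X\<in>\<X>. r_disjoint (R 1) (snd X) (D X)"
    proof
      fix X assume "X \<in> \<X>"
      with D have "r_disjoint (max (R 1) 1) (snd X) (D X)" by blast
      then show "r_disjoint (R 1) (snd X) (D X)" by (rule r_disjoint_mono[rotated]) simp
    qed
    ultimately have "decomposes R \<X> {(U, snd X) | X U. X \<in> \<X> \<and> U \<in> D X}"
      by (rule decomposes_into_disjoint_covers)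
    with pieces succ(1) show "\<exists>\<beta><\<alpha>'. \<exists>\<Y>. inC \<beta> \<Y> \<and> decomposes R \<X> \<Y>"
      by (intro exI[of _ \<alpha>] conjI impI exI[of _ "{(U, snd X) | X U. X \<in> \<X> \<and> U \<in> D X}"])
  qed
qed

end
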